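(* Let $\mathbf{A}$ be the $6\times 3$ matrix with rows $(1,1,0),(1,1,0),(1,0,1),(1,0,1),(0,1,1),(0,1,1)$, and $\mathbf{B}$ the $6\times 8$ matrix with rows $(1,1,1,0,0,1,0,0)$, $(1,0,0,1,1,1,0,0)$, $(1,1,0,1,0,0,1,0)$, $(1,0,1,0,1,0,1,0)$, $(1,1,0,0,1,0,0,1)$, $(1,0,1,1,0,0,0,1)$. Let $\mathbf{L}$ be the $8\times 15$ matrix whose first six rows form the block $(\mathbf{A}\mid \mathbf{I}_6\mid \mathbf{I}_6)$, whose seventh row is all ones and whose eighth row is all zeros; let $\mathbf{R}$ be the $8\times 15$ matrix whose first six rows form $(\mathbf{B}\mid \mathbf{O}_{6\times 7})$, whose seventh row is all ones and whose eighth row is all zeros. Then $(\mathbf{L},\mathbf{R})$ is centered and $\mathbf{L}\preceq^{\mathrm{PC}}\mathbf{R}$, but $(\mathbf{L},\mathbf{R})$ admits no dominance map.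
   Context: $\mathbf{I}_6$ is the $6\times6$ identity matrix and $\mathbf{O}_{6\times7}$ the zero matrix. $\mathbf{A}_{(i)}$ is the $i$-th row; $e$ the all-ones row vector; $|v|=\sum_k|v_k|$; $\le$ between vectors is componentwise. A pair of $(0,1)$-matrices with the same number of rows, having a common all-zero row, is centered if $|\mathbf{L}_{(i)}|=|\mathbf{R}_{(i)}|$ for all $i$ and some row satisfies $\mathbf{L}_{(i)}=e=\mathbf{R}_{(i)}$. A dominance map is $f:\{0,1\}^{m}\to\{0,1\}^{m}$ ($m$ the common number of columns) with $|u|=|f(u)|$ and $\mathbf{L}u^T\le\mathbf{R}f(u)^T$ for all $u$. $\mathbf{L}\preceq^{\mathrm{PC}}\mathbf{R}$ means $v\mathbf{L}\preceq v\mathbf{R}$ for all $v\in\mathbb{R}_{\ge0}^{8}$, where for $x,y\in\mathbb{R}^d$, $x\preceq y$ means $\sum_{n=1}^k x^\downarrow_n\le\sum_{n=1}^k y^\downarrow_n$ for $k<d$ and equal total sums, $x^\downarrow_n$ being the $n$-th largest component. *)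

theory Defs
  imports Complex_Main
begin

text \<open>Matrices with n rows and m columns are represented as functions
  nat \<Rightarrow> nat \<Rightarrow> real, only entries with i < n, j < m being relevant.
  Row vectors of length d are functions nat \<Rightarrow> real (indices < d relevant),
  or real lists of length d.\<close>

definition zero_one_matrix :: "nat \<Rightarrow> nat \<Rightarrow> (nat \<Rightarrow> nat \<Rightarrow> real) \<Rightarrow> bool" where
  "zero_one_matrix n m M \<longleftrightarrow> (\<forall>i<n. \<forall>j<m. M i j \<in> {0, 1})"

definition row_norm :: "nat \<Rightarrow> (nat \<Rightarrow> nat \<Rightarrow> real) \<Rightarrow> nat \<Rightarrow> real" where
  "row_norm m M i = (\<Sum>j<m. \<bar>M i j\<bar>)"

text \<open>Centered pair (including the standing requirements: (0,1)-matrices with a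
  common all-zero row).\<close>
definition centered :: "nat \<Rightarrow> nat \<Rightarrow> (nat \<Rightarrow> nat \<Rightarrow> real) \<Rightarrow> (nat \<Rightarrow> nat \<Rightarrow> real) \<Rightarrow> bool" where
  "centered n m L R \<longleftrightarrow>
     zero_one_matrix n m L \<and> zero_one_matrix n m R \<and>
     (\<exists>i<n. \<forall>j<m. L i j = 0 \<and> R i j = 0) \<and>
     (\<forall>i<n. row_norm m L i = row_norm m R i) \<and>
     (\<exists>i<n. \<forall>j<m. L i j = 1 \<and> R i j = 1)"

definition binvecs :: "nat \<Rightarrow> (nat \<Rightarrow> real) set" where
  "binvecs m = {u. (\<forall>j<m. u j \<in> {0, 1}) \<and> (\<forall>j\<ge>m. u j = 0)}"

definition vnorm :: "nat \<Rightarrow> (nat \<Rightarrow> real) \<Rightarrow> real" where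
  "vnorm m u = (\<Sum>j<m. \<bar>u j\<bar>)"

definition dominance_map ::
  "nat \<Rightarrow> nat \<Rightarrow> (nat \<Rightarrow> nat \<Rightarrow> real) \<Rightarrow> (nat \<Rightarrow> nat \<Rightarrow> real) \<Rightarrow> ((nat \<Rightarrow> real) \<Rightarrow> (nat \<Rightarrow> real)) \<Rightarrow> bool" where
  "dominance_map n m L R f \<longleftrightarrow>
     (\<forall>u\<in>binvecs m. f u \<in> binvecs m \<and> vnorm m u = vnorm m (f u) \<and>
        (\<forall>i<n. (\<Sum>j<m. L i j * u j) \<le> (\<Sum>j<m. R i j * f u j)))"

definition decr :: "real list \<Rightarrow> real list" where
  "decr x = rev (sort x)"

definition majorized :: "real list \<Rightarrow> real list \<Rightarrow> bool" (infix "\<preceq>\<^sub>m" 50) where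
  "x \<preceq>\<^sub>m y \<longleftrightarrow> length x = length y \<and>
     (\<forall>k < length x. sum_list (take k (decr x)) \<le> sum_list (take k (decr y))) \<and>
     sum_list x = sum_list y"

definition vecmat :: "nat \<Rightarrow> nat \<Rightarrow> (nat \<Rightarrow> real) \<Rightarrow> (nat \<Rightarrow> nat \<Rightarrow> real) \<Rightarrow> real list" where
  "vecmat n m v M = map (\<lambda>j. \<Sum>i<n. v i * M i j) [0..<m]"

definition pc_dom :: "nat \<Rightarrow> nat \<Rightarrow> (nat \<Rightarrow> nat \<Rightarrow> real) \<Rightarrow> (nat \<Rightarrow> nat \<Rightarrow> real) \<Rightarrow> bool" where
  "pc_dom n m L R \<longleftrightarrow> (\<forall>v. (\<forall>i<n. v i \<ge> 0) \<longrightarrow> vecmat n m v L \<preceq>\<^sub>m vecmat n m v R)"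

definition mat_of_rows :: "nat list list \<Rightarrow> nat \<Rightarrow> nat \<Rightarrow> real" where
  "mat_of_rows rs i j = real (rs ! i ! j)"

definition A_rows :: "nat list list" where
  "A_rows = [[1,1,0],[1,1,0],[1,0,1],[1,0,1],[0,1,1],[0,1,1]]"

definition B_rows :: "nat list list" where
  "B_rows = [[1,1,1,0,0,1,0,0],[1,0,0,1,1,1,0,0],[1,1,0,1,0,0,1,0],
             [1,0,1,0,1,0,1,0],[1,1,0,0,1,0,0,1],[1,0,1,1,0,0,0,1]]"

definition unit6 :: "nat \<Rightarrow> nat list" where
  "unit6 i = map (\<lambda>k. if k = i then 1 else 0) [0..<6]"

definition L_rows :: "nat list list" where
  "L_rows = map (\<lambda>i. A_rows ! i @ unit6 i @ unit6 i) [0..<6] @ [replicate 15 1, replicate 15 0]"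

definition R_rows :: "nat list list" where
  "R_rows = map (\<lambda>i. B_rows ! i @ replicate 7 0) [0..<6] @ [replicate 15 1, replicate 15 0]"

definition Lmat :: "nat \<Rightarrow> nat \<Rightarrow> real" where "Lmat = mat_of_rows L_rows"
definition Rmat :: "nat \<Rightarrow> nat \<Rightarrow> real" where "Rmat = mat_of_rows R_rows"

end

theory Submission
  imports Defs "HOL-Library.Multiset"
begin

(* For v >= 0 the lists vL and vR are the weighted column sums of the first six rows,
   shifted by v 6. Majorization follows from the classical criterion: equal totals and
   sum_i min x_i t >= sum_i min y_i t for every cap t (equivalently, the excesses
   sum_i (x_i - t)^+ of x are at most those of y). Writing a, ..., f for v 0, ..., v 5, these
   capped sums are compared using that z |-> min z t is subadditive and concave on [0, oo):
   if some two of the groups a + b, c + d, e + f sum to less than t, concavity handles the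
   group terms; otherwise the three four-term sums in vL all reach the cap and a counting
   bound suffices.

   A dominance map fails at the indicator u of the three columns of A: every row of A u
   equals 2, so w = f u has weight 3 and B w >= 2 rowwise. Indexing columns from 0, the sum
   of these six rows reads 6 w_0 + 3 (w_1 + ... + w_4) + 2 (w_5 + w_6 + w_7) >= 12, which
   forces w_0 = 1 and exactly two of w_1, ..., w_4 to be 1; but no two of the columns 1-4
   of B have complementary supports. *)

definition excess :: "real \<Rightarrow> real list \<Rightarrow> real" where
  "excess t xs = (\<Sum>x\<leftarrow>xs. max (x - t) 0)"

lemma length_decr [simp]: "length (decr xs) = length xs"
  by (simp add: decr_def)

lemma sorted_wrt_decr: "sorted_wrt (\<ge>) (decr xs)"
  by (simp add: decr_def sorted_wrt_rev)

lemma sum_list_map_decr: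
  fixes f :: "real \<Rightarrow> 'a::comm_monoid_add"
  shows "sum_list (map f (decr xs)) = sum_list (map f xs)"
proof -
  have "mset (map f (decr xs)) = mset (map f xs)"
    by (simp add: decr_def)
  then show ?thesis
    by (metis sum_mset_sum_list)
qed

lemma excess_decr [simp]: "excess t (decr xs) = excess t xs"
  by (simp add: excess_def sum_list_map_decr)

lemma excess_append: "excess t (xs @ ys) = excess t xs + excess t ys"
  by (simp add: excess_def)

lemma excess_nonneg: "0 \<le> excess t xs"
  unfolding excess_def by (rule sum_list_nonneg) auto

lemma excess_eq_sum_list_minus_capped: "excess t xs = sum_list xs - (\<Sum>x\<leftarrow>xs. min x t)"
  by (induction xs) (auto simp: excess_def max_def min_def)

lemma sum_list_le_excess: "sum_list xs \<le> real (length xs) * t + excess t xs"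
  by (induction xs) (auto simp: excess_def algebra_simps)

lemma sum_list_eq_excess:
  fixes t :: real
  shows "(\<And>x. x \<in> set xs \<Longrightarrow> t \<le> x) \<Longrightarrow> sum_list xs = real (length xs) * t + excess t xs"
  by (induction xs) (auto simp: excess_def algebra_simps)

lemma excess_eq_0: "(\<And>x. x \<in> set xs \<Longrightarrow> x \<le> t) \<Longrightarrow> excess t xs = 0"
  by (induction xs) (auto simp: excess_def)

lemma sum_take_decr_le:
  assumes "k \<le> length xs"
  shows "sum_list (take k (decr xs)) \<le> real k * t + excess t xs"
proof -
  have "sum_list (take k (decr xs)) \<le> real k * t + excess t (take k (decr xs))"
    using sum_list_le_excess[of "take k (decr xs)" t] assms by simp
  also have "\<dots> \<le> real k * t + excess t (decr xs)"
    using excess_append[of t "take k (decr xs)" "drop k (decr xs)"]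
      excess_nonneg[of t "drop k (decr xs)"] by simp
  finally show ?thesis by simp
qed

lemma sum_take_sorted_eq:
  fixes ds :: "real list"
  assumes sorted: "sorted_wrt (\<ge>) ds" and k: "k < length ds"
  shows "sum_list (take k ds) = k * ds ! k + excess (ds ! k) ds"
proof -
  let ?t = "ds ! k"
  have drop_eq: "drop k ds = ?t # drop (Suc k) ds"
    using k by (rule Cons_nth_drop_Suc[symmetric])
  have "sorted_wrt (\<ge>) (take k ds @ drop k ds)"
    using sorted by simp
  then have above: "\<forall>x\<in>set (take k ds). \<forall>y\<in>set (drop k ds). y \<le> x"
    and "sorted_wrt (\<ge>) (drop k ds)"
    unfolding sorted_wrt_append by blast+
  then have below: "\<forall>y\<in>set (drop k ds). y \<le> ?t"
    unfolding drop_eq by auto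
  have "sum_list (take k ds) = k * ?t + excess ?t (take k ds)"
    using sum_list_eq_excess[of "take k ds" ?t] above k unfolding drop_eq by simp
  moreover have "excess ?t (drop k ds) = 0"
    using below by (simp add: excess_eq_0)
  ultimately show ?thesis
    using excess_append[of ?t "take k ds" "drop k ds"] by simp
qed

lemma majorized_if_excess_le:
  assumes "length xs = length ys" and "sum_list xs = sum_list ys"
    and "\<And>t. excess t xs \<le> excess t ys"
  shows "xs \<preceq>\<^sub>m ys"
  unfolding majorized_def
proof (intro conjI allI impI)
  fix k assume k: "k < length xs"
  define t where "t = decr ys ! k"
  have "sum_list (take k (decr xs)) \<le> k * t + excess t xs"
    using k by (simp add: sum_take_decr_le)
  also have "\<dots> \<le> k * t + excess t ys"
    using assms(3) by simp
  also have "\<dots> = sum_list (take k (decr ys))"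
    using sum_take_sorted_eq[OF sorted_wrt_decr, of k ys] k assms(1) by (simp add: t_def)
  finally show "sum_list (take k (decr xs)) \<le> sum_list (take k (decr ys))" .
qed (use assms in auto)

lemma majorized_if_capped_sums_ge:
  assumes "length xs = length ys" and "sum_list xs = sum_list ys"
    and "\<And>t. (\<Sum>y\<leftarrow>ys. min y t) \<le> (\<Sum>x\<leftarrow>xs. min x t)"
  shows "xs \<preceq>\<^sub>m ys"
  by (rule majorized_if_excess_le) (use assms in \<open>simp_all add: excess_eq_sum_list_minus_capped\<close>)

lemma capped_sum_shift:
  fixes c t :: real
  shows "(\<Sum>z\<leftarrow>map (\<lambda>z. z + c) zs. min z t) = (\<Sum>z\<leftarrow>zs. min z (t - c)) + length zs * c"
proof -
  have "min (z + c) t = min z (t - c) + c" for z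
    unfolding min_def by auto
  then show ?thesis
    by (simp add: o_def sum_list_addf sum_list_triv)
qed

lemma capped_sum_nonpos_cap:
  fixes t :: real
  assumes "\<And>z. z \<in> set zs \<Longrightarrow> 0 \<le> z" and "t \<le> 0"
  shows "(\<Sum>z\<leftarrow>zs. min z t) = length zs * t"
proof -
  have "min z t = t" if "z \<in> set zs" for z
    using assms(1)[OF that] assms(2) by (simp add: min_def)
  then have "(\<Sum>z\<leftarrow>zs. min z t) = (\<Sum>z\<leftarrow>zs. t)"
    by (simp cong: map_cong)
  then show ?thesis
    by (simp add: sum_list_triv)
qed

lemma min_add_le_add_min:
  fixes x y s :: real
  assumes "0 \<le> x" "0 \<le> y" "0 \<le> s"
  shows "min (x + y) s \<le> min x s + min y s"
  using assms by (simp add: min_def)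

lemma min_add_submodular:
  fixes a b c s :: real
  assumes "0 \<le> a" "0 \<le> b"
  shows "min (a + b + c) s + min c s \<le> min (a + c) s + min (b + c) s"
  using assms by (simp add: min_def)

lemma min_three_groups:
  fixes P Q R s :: real
  assumes "0 \<le> P" "0 \<le> Q" "0 \<le> R" and "P + Q < s \<or> P + R < s \<or> Q + R < s"
  shows "min (P + Q + R) s + min P s + min Q s + min R s
    \<le> min (P + Q) s + min (P + R) s + min (Q + R) s"
proof -
  have below_cap: "min x s + min y s = min (x + y) s" if "0 \<le> x" "0 \<le> y" "x + y < s" for x y :: real
    using that by (simp add: min_def)
  from assms(4) show ?thesis
  proof (elim disjE)
    assume "P + Q < s"
    then show ?thesis
      using below_cap[of P Q] min_add_submodular[of P Q R s] assms(1-3) by linarith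
  next
    assume "P + R < s"
    moreover have "min (P + Q + R) s + min Q s \<le> min (P + Q) s + min (Q + R) s"
      using min_add_submodular[of P R Q s] assms(1,3) by (simp add: ac_simps)
    ultimately show ?thesis
      using below_cap[of P R] assms(1,3) by linarith
  next
    assume "Q + R < s"
    moreover have "min (P + Q + R) s + min P s \<le> min (P + Q) s + min (P + R) s"
      using min_add_submodular[of Q R P s] assms(2,3) by (simp add: ac_simps)
    ultimately show ?thesis
      using below_cap[of Q R] assms(2,3) by linarith
  qed
qed

lemma capped_sum_inequality:
  fixes a b c d e f s :: real
  assumes "0 \<le> a" "0 \<le> b" "0 \<le> c" "0 \<le> d" "0 \<le> e" "0 \<le> f" "0 \<le> s"
  shows "min (a+b+c+d+e+f) s + min (a+c+e) s + min (a+d+f) s + min (b+c+f) s + min (b+d+e) s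
      + min (a+b) s + min (c+d) s + min (e+f) s
    \<le> min (a+b+c+d) s + min (a+b+e+f) s + min (c+d+e+f) s
      + 2 * (min a s + min b s + min c s + min d s + min e s + min f s)"
proof -
  note subadd = min_add_le_add_min[OF _ _ \<open>0 \<le> s\<close>]
  have subadd3: "min (x + y + z) s \<le> min x s + min y s + min z s" if "0 \<le> x" "0 \<le> y" "0 \<le> z" for x y z
    using subadd[of "x + y" z] subadd[of x y] that by simp
  define W where "W = min a s + min b s + min c s + min d s + min e s + min f s"
  define T where "T = min (a+c+e) s + min (a+d+f) s + min (b+c+f) s + min (b+d+e) s"
  have T_le: "T \<le> 2 * W"
    using subadd3[of a c e] subadd3[of a d f] subadd3[of b c f] subadd3[of b d e] assms
    unfolding T_def W_def by simp
  consider (below) "a+b+c+d < s \<or> a+b+e+f < s \<or> c+d+e+f < s"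
    | (above) "s \<le> a+b+c+d" "s \<le> a+b+e+f" "s \<le> c+d+e+f"
    by linarith
  then show ?thesis
  proof cases
    case below
    then have "min (a+b+c+d+e+f) s + min (a+b) s + min (c+d) s + min (e+f) s
        \<le> min (a+b+c+d) s + min (a+b+e+f) s + min (c+d+e+f) s"
      using min_three_groups[of "a+b" "c+d" "e+f" s] assms by (simp add: ac_simps)
    then show ?thesis
      using T_le unfolding T_def W_def by linarith
  next
    case above
    have pairs_le: "min (a+b) s + min (c+d) s + min (e+f) s \<le> W"
      using subadd[of a b] subadd[of c d] subadd[of e f] assms unfolding W_def by simp
    have "T \<le> 4 * s"
      unfolding T_def by simp
    then have "T + min (a+b) s + min (c+d) s + min (e+f) s \<le> 2 * W + 2 * s"
      using T_le pairs_le by (cases "W \<le> 2 * s") linarith+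
    moreover have "min (a+b+c+d) s = s" "min (a+b+e+f) s = s" "min (c+d+e+f) s = s"
      using above by (simp_all add: min_absorb2)
    moreover have "min (a+b+c+d+e+f) s \<le> s"
      by simp
    ultimately show ?thesis
      unfolding T_def W_def by linarith
  qed
qed

lemma L_rows_eq:
  "L_rows =
    [[1,1,0, 1,0,0,0,0,0, 1,0,0,0,0,0],
     [1,1,0, 0,1,0,0,0,0, 0,1,0,0,0,0],
     [1,0,1, 0,0,1,0,0,0, 0,0,1,0,0,0],
     [1,0,1, 0,0,0,1,0,0, 0,0,0,1,0,0],
     [0,1,1, 0,0,0,0,1,0, 0,0,0,0,1,0],
     [0,1,1, 0,0,0,0,0,1, 0,0,0,0,0,1],
     replicate 15 1, replicate 15 0]"
  by (simp add: L_rows_def A_rows_def unit6_def upt_rec)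

lemma R_rows_eq:
  "R_rows =
    [[1,1,1,0,0,1,0,0, 0,0,0,0,0,0,0],
     [1,0,0,1,1,1,0,0, 0,0,0,0,0,0,0],
     [1,1,0,1,0,0,1,0, 0,0,0,0,0,0,0],
     [1,0,1,0,1,0,1,0, 0,0,0,0,0,0,0],
     [1,1,0,0,1,0,0,1, 0,0,0,0,0,0,0],
     [1,0,1,1,0,0,0,1, 0,0,0,0,0,0,0],
     replicate 15 1, replicate 15 0]"
  by (simp add: R_rows_def B_rows_def upt_rec eval_nat_numeral)

definition L_column_sums :: "(nat \<Rightarrow> real) \<Rightarrow> real list" where
  "L_column_sums v =
    [v 0 + v 1 + v 2 + v 3, v 0 + v 1 + v 4 + v 5, v 2 + v 3 + v 4 + v 5,
     v 0, v 1, v 2, v 3, v 4, v 5, v 0, v 1, v 2, v 3, v 4, v 5]"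

definition R_column_sums :: "(nat \<Rightarrow> real) \<Rightarrow> real list" where
  "R_column_sums v =
    [v 0 + v 1 + v 2 + v 3 + v 4 + v 5, v 0 + v 2 + v 4, v 0 + v 3 + v 5, v 1 + v 2 + v 5,
     v 1 + v 3 + v 4, v 0 + v 1, v 2 + v 3, v 4 + v 5, 0, 0, 0, 0, 0, 0, 0]"

lemma vecmat_Lmat: "vecmat 8 15 v Lmat = map (\<lambda>z. z + v 6) (L_column_sums v)"
  by (simp add: vecmat_def upt_rec eval_nat_numeral Lmat_def mat_of_rows_def L_rows_eq
      L_column_sums_def)

lemma vecmat_Rmat: "vecmat 8 15 v Rmat = map (\<lambda>z. z + v 6) (R_column_sums v)"
  by (simp add: vecmat_def upt_rec eval_nat_numeral Rmat_def mat_of_rows_def R_rows_eq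
      R_column_sums_def)

lemma length_column_sums [simp]:
  "length (L_column_sums v) = 15" "length (R_column_sums v) = 15"
  by (simp_all add: L_column_sums_def R_column_sums_def)

lemma capped_column_sums_le:
  assumes nonneg: "\<And>i. i < 6 \<Longrightarrow> 0 \<le> v i"
  shows "(\<Sum>z\<leftarrow>R_column_sums v. min z s) \<le> (\<Sum>z\<leftarrow>L_column_sums v. min z s)"
proof (cases "s \<le> 0")
  case True
  have "0 \<le> z" if "z \<in> set (L_column_sums v) \<union> set (R_column_sums v)" for z
    using that nonneg[of 0] nonneg[of 1] nonneg[of 2] nonneg[of 3] nonneg[of 4] nonneg[of 5]
    by (auto simp: L_column_sums_def R_column_sums_def)
  then have "(\<Sum>z\<leftarrow>L_column_sums v. min z s) = 15 * s" "(\<Sum>z\<leftarrow>R_column_sums v. min z s) = 15 * s"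
    using capped_sum_nonpos_cap[OF _ True] by auto
  then show ?thesis
    by simp
next
  case False
  then show ?thesis
    using capped_sum_inequality[of "v 0" "v 1" "v 2" "v 3" "v 4" "v 5" s] nonneg
    by (simp add: L_column_sums_def R_column_sums_def min_absorb1)
qed

lemma pc_dom_LR: "pc_dom 8 15 Lmat Rmat"
  unfolding pc_dom_def vecmat_Lmat vecmat_Rmat
proof (intro allI impI majorized_if_capped_sums_ge)
  fix v :: "nat \<Rightarrow> real" and t :: real
  assume "\<forall>i<8. 0 \<le> v i"
  then have "(\<Sum>z\<leftarrow>R_column_sums v. min z (t - v 6)) \<le> (\<Sum>z\<leftarrow>L_column_sums v. min z (t - v 6))"
    by (intro capped_column_sums_le) simp
  then show "(\<Sum>z\<leftarrow>map (\<lambda>z. z + v 6) (R_column_sums v). min z t)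
      \<le> (\<Sum>z\<leftarrow>map (\<lambda>z. z + v 6) (L_column_sums v). min z t)"
    unfolding capped_sum_shift by simp
qed (simp_all add: L_column_sums_def R_column_sums_def)

lemma zero_one_matrix_mat_of_rows:
  assumes "length rs = n" and "\<And>r. r \<in> set rs \<Longrightarrow> length r = m \<and> set r \<subseteq> {0, 1}"
  shows "zero_one_matrix n m (mat_of_rows rs)"
  unfolding zero_one_matrix_def mat_of_rows_def
proof (intro allI impI)
  fix i j assume "i < n" "j < m"
  with assms have "rs ! i ! j \<in> {0, 1}"
    by (metis nth_mem subsetD)
  then show "real (rs ! i ! j) \<in> {0, 1}"
    by auto
qed

lemma centered_LR: "centered 8 15 Lmat Rmat"
  unfolding centered_def
proof (intro conjI)
  show "zero_one_matrix 8 15 Lmat" "zero_one_matrix 8 15 Rmat"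
    unfolding Lmat_def Rmat_def
    by (rule zero_one_matrix_mat_of_rows; auto simp: L_rows_eq R_rows_eq)+
  show "\<exists>i<8. \<forall>j<15. Lmat i j = 0 \<and> Rmat i j = 0"
    by (rule exI[of _ 7]) (simp add: Lmat_def Rmat_def mat_of_rows_def L_rows_eq R_rows_eq)
  show "\<exists>i<8. \<forall>j<15. Lmat i j = 1 \<and> Rmat i j = 1"
    by (rule exI[of _ 6]) (simp add: Lmat_def Rmat_def mat_of_rows_def L_rows_eq R_rows_eq)
  show "\<forall>i<8. row_norm 15 Lmat i = row_norm 15 Rmat i"
    unfolding row_norm_def Lmat_def Rmat_def mat_of_rows_def
    by (simp add: L_rows_eq R_rows_eq less_Suc_eq eval_nat_numeral)
qed

lemma no_dominance_map_LR: "\<not> (\<exists>f. dominance_map 8 15 Lmat Rmat f)"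
proof
  assume "\<exists>f. dominance_map 8 15 Lmat Rmat f"
  then obtain f where f: "dominance_map 8 15 Lmat Rmat f" ..
  define u :: "nat \<Rightarrow> real" where "u j = (if j < 3 then 1 else 0)" for j
  define w where "w = f u"
  have "u \<in> binvecs 15"
    by (simp add: u_def binvecs_def)
  then have w_bin: "w \<in> binvecs 15" and w_norm: "vnorm 15 u = vnorm 15 w"
    and w_rows: "\<forall>i<8. (\<Sum>j<15. Lmat i j * u j) \<le> (\<Sum>j<15. Rmat i j * w j)"
    using f unfolding dominance_map_def w_def by auto
  have w01: "w j \<in> {0, 1}" if "j < 15" for j
    using w_bin that by (simp add: binvecs_def)
  then have bounds: "0 \<le> w j" "w j \<le> 1" if "j < 15" for j
    using that by fastforce+
  then have "\<bar>w j\<bar> = w j" if "j < 15" for j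
    using that by simp
  then have "vnorm 15 w = (\<Sum>j<15. w j)"
    unfolding vnorm_def by simp
  moreover have "vnorm 15 u = 3"
    by (simp add: vnorm_def u_def eval_nat_numeral)
  moreover have "(\<Sum>j<8. w j) \<le> (\<Sum>j<15. w j)"
    using bounds by (intro sum_mono2) auto
  ultimately have first8: "w 0 + w 1 + w 2 + w 3 + w 4 + w 5 + w 6 + w 7 \<le> 3"
    using w_norm by (simp add: eval_nat_numeral)
  have rows: "2 \<le> w 0 + w 1 + w 2 + w 5" "2 \<le> w 0 + w 3 + w 4 + w 5"
    "2 \<le> w 0 + w 1 + w 3 + w 6" "2 \<le> w 0 + w 2 + w 4 + w 6"
    "2 \<le> w 0 + w 1 + w 4 + w 7" "2 \<le> w 0 + w 2 + w 3 + w 7"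
    using w_rows
    by (simp_all add: less_Suc_eq eval_nat_numeral u_def Lmat_def Rmat_def mat_of_rows_def
        L_rows_eq R_rows_eq)
  have "w 0 = 1" "w 5 = 0" "w 6 = 0" "w 7 = 0" "w 1 + w 2 + w 3 + w 4 = 2"
    using rows first8 bounds[of 0] bounds[of 5] bounds[of 6] bounds[of 7] by linarith+
  with rows show False
    using w01[of 1] w01[of 2] w01[of 3] w01[of 4] by auto
qed

theorem mainTheorem9:
  shows "centered 8 15 Lmat Rmat \<and> pc_dom 8 15 Lmat Rmat \<and>
         \<not> (\<exists>f. dominance_map 8 15 Lmat Rmat f)"
  using centered_LR pc_dom_LR no_dominance_map_LR by blast

end
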